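(* Let $\mathcal T\subseteq\mathbb N$ be a symmetric numerical semigroup with minimal system of generators $a_1<\dots<a_n$. If $2\notin\mathcal T$, then $a_n<F(\mathcal T)$.
   Context: A numerical semigroup is a submonoid $\mathcal T\subseteq\mathbb N$ with finite complement; its Frobenius number is $F(\mathcal T)=\max(\mathbb N\setminus\mathcal T)$; $\mathcal T$ is symmetric if for every $b\in\mathbb N$, $b\in\mathcal T$ or $F(\mathcal T)-b\in\mathcal T$. The minimal system of generators is the unique minimal generating set of $\mathcal T$ as a monoid. *)

theory Defs
  imports Main
begin

definition numerical_semigroup :: "nat set \<Rightarrow> bool" where
  "numerical_semigroup T \<longleftrightarrow> 0 \<in> T \<and> (\<forall>x\<in>T. \<forall>y\<in>T. x + y \<in> T) \<and> finite (UNIV - T)"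

definition frobenius :: "nat set \<Rightarrow> nat" where
  "frobenius T = Max (UNIV - T)"

definition symmetric_ns :: "nat set \<Rightarrow> bool" where
  "symmetric_ns T \<longleftrightarrow> numerical_semigroup T \<and> (\<forall>b. b \<in> T \<or> (b \<le> frobenius T \<and> frobenius T - b \<in> T))"

inductive_set generated :: "nat set \<Rightarrow> nat set" for A where
  zero: "0 \<in> generated A"
| add: "a \<in> A \<Longrightarrow> x \<in> generated A \<Longrightarrow> a + x \<in> generated A"

definition minimal_generators :: "nat set \<Rightarrow> nat set \<Rightarrow> bool" where
  "minimal_generators T A \<longleftrightarrow> generated A = T \<and> (\<forall>B. B \<subset> A \<longrightarrow> generated B \<noteq> T)"

end

theory Submission
  imports Defs
begin

text \<open>Suppose a minimal generator \<open>a\<close> exceeded \<open>F = frobenius T\<close> and put \<open>d = a - F\<close>.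
  For \<open>0 < s < a\<close> in \<open>T\<close>, minimality forbids \<open>a - s \<in> T\<close>, so symmetry puts
  \<open>F - (a - s) = s - d\<close> into \<open>T\<close>. Descending in steps of \<open>d\<close> shows that \<open>d\<close> divides every
  element of \<open>T\<close> below \<open>a\<close> and lies in \<open>T\<close>. Since \<open>1, 2 \<notin> T\<close>, symmetry gives
  \<open>F - 1, F - 2 \<in> T\<close>, so \<open>d\<close> divides 1 and \<open>1 = d \<in> T\<close>, a contradiction.\<close>

lemma generated_add:
  "x \<in> generated A \<Longrightarrow> y \<in> generated A \<Longrightarrow> x + y \<in> generated A"
  by (induction x rule: generated.induct) (auto simp: add.assoc intro: generated.add)

lemma generator_in_generated: "a \<in> A \<Longrightarrow> a \<in> generated A"
  using generated.add[OF _ generated.zero] by simp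

lemma generated_least:
  assumes "A \<subseteq> generated B"
  shows "generated A \<subseteq> generated B"
proof
  show "x \<in> generated B" if "x \<in> generated A" for x
    using that by (induction x rule: generated.induct)
      (use assms in \<open>auto intro: generated.zero generated_add\<close>)
qed

lemma generated_mono: "A \<subseteq> B \<Longrightarrow> generated A \<subseteq> generated B"
  by (meson generated_least generator_in_generated subset_iff)

lemma generated_less_remove:
  "t \<in> generated A \<Longrightarrow> t < a \<Longrightarrow> t \<in> generated (A - {a})"
  by (induction t rule: generated.induct) (auto intro: generated.intros)

definition sum_indecomposable :: "nat set \<Rightarrow> nat \<Rightarrow> bool" where
  "sum_indecomposable T a \<longleftrightarrow> a \<in> T \<and> (\<forall>x\<in>T. \<forall>y\<in>T. x + y = a \<longrightarrow> x = 0 \<or> y = 0)"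

lemma sum_indecomposableD:
  "sum_indecomposable T a \<Longrightarrow> x \<in> T \<Longrightarrow> y \<in> T \<Longrightarrow> x + y = a \<Longrightarrow> x = 0 \<or> y = 0"
  unfolding sum_indecomposable_def by simp

lemma minimal_generator_indecomposable:
  assumes mg: "minimal_generators T A" and "a \<in> A"
  shows "sum_indecomposable T a"
proof -
  have gA: "generated A = T" using mg by (simp add: minimal_generators_def)
  have "x = 0 \<or> y = 0" if "x \<in> T" "y \<in> T" "x + y = a" for x y
  proof (rule ccontr)
    assume "\<not> (x = 0 \<or> y = 0)"
    with that gA have "x \<in> generated (A - {a})" "y \<in> generated (A - {a})"
      by (auto intro: generated_less_remove)
    then have "a \<in> generated (A - {a})" using generated_add that(3) by blast
    then have "A \<subseteq> generated (A - {a})" by (auto intro: generator_in_generated)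
    then have "generated (A - {a}) = T"
      using generated_least generated_mono[of "A - {a}" A] gA by blast
    moreover have "A - {a} \<subset> A" using \<open>a \<in> A\<close> by blast
    ultimately show False using mg by (simp add: minimal_generators_def)
  qed
  moreover have "a \<in> T" using gA \<open>a \<in> A\<close> generator_in_generated by blast
  ultimately show ?thesis by (simp add: sum_indecomposable_def)
qed

lemma not_in_le_frobenius:
  "numerical_semigroup T \<Longrightarrow> x \<notin> T \<Longrightarrow> x \<le> frobenius T"
  unfolding numerical_semigroup_def frobenius_def by (simp add: Max_ge)

lemma frobenius_not_in:
  assumes "numerical_semigroup T" and "x \<notin> T"
  shows "frobenius T \<notin> T"
  using assms Max_in[of "UNIV - T"] unfolding numerical_semigroup_def frobenius_def by blast

lemma symmetric_complement:
  "symmetric_ns T \<Longrightarrow> b \<notin> T \<Longrightarrow> frobenius T - b \<in> T"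
  unfolding symmetric_ns_def by blast

context
  fixes T :: "nat set" and a :: nat
  assumes sym: "symmetric_ns T"
    and indec: "sum_indecomposable T a"
    and above: "frobenius T < a"
begin

lemma indecomposable_above_frobenius_shift:
  assumes "s \<in> T" "0 < s" "s < a"
  shows "a - frobenius T \<le> s \<and> s - (a - frobenius T) \<in> T"
proof -
  have "a - s \<notin> T"
  proof
    assume "a - s \<in> T"
    moreover have "s + (a - s) = a" using assms(3) by simp
    ultimately have "s = 0 \<or> a - s = 0"
      by (rule sum_indecomposableD[OF indec assms(1)])
    with assms show False by simp
  qed
  then have "a - s \<le> frobenius T" "frobenius T - (a - s) \<in> T"
    using sym unfolding symmetric_ns_def by blast+
  moreover have "frobenius T - (a - s) = s - (a - frobenius T)" using above assms by simp
  ultimately show ?thesis using assms by simp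
qed

lemma indecomposable_above_frobenius_dvd:
  "s \<in> T \<Longrightarrow> s < a \<Longrightarrow> (a - frobenius T) dvd s"
proof (induction s rule: less_induct)
  case (less s)
  show ?case
  proof (cases "s = 0")
    case False
    with less.prems have le: "a - frobenius T \<le> s" and mem: "s - (a - frobenius T) \<in> T"
      using indecomposable_above_frobenius_shift by auto
    have "(a - frobenius T) dvd s - (a - frobenius T)"
      using less.IH[OF _ mem] False above less.prems(2) by simp
    then show ?thesis using le by (rule dvd_diffD[OF _ dvd_refl])
  qed simp
qed

lemma indecomposable_above_frobenius_diff_in:
  "s \<in> T \<Longrightarrow> 0 < s \<Longrightarrow> s < a \<Longrightarrow> a - frobenius T \<in> T"
proof (induction s rule: less_induct)
  case (less s)
  then have le: "a - frobenius T \<le> s" and mem: "s - (a - frobenius T) \<in> T"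
    using indecomposable_above_frobenius_shift by auto
  show ?case
  proof (cases "s = a - frobenius T")
    case False
    with le above less.prems(3) show ?thesis
      by (intro less.IH[OF _ mem]) simp_all
  qed (use less in simp)
qed

end

lemma sum_indecomposable_less_frobenius:
  assumes sym: "symmetric_ns T" and two: "2 \<notin> T" and indec: "sum_indecomposable T a"
  shows "a < frobenius T"
proof (rule ccontr)
  let ?F = "frobenius T"
  assume "\<not> a < ?F"
  have ns: "numerical_semigroup T" using sym by (simp add: symmetric_ns_def)
  have "a \<in> T" using indec by (simp add: sum_indecomposable_def)
  moreover have "?F \<notin> T" using frobenius_not_in[OF ns two] .
  ultimately have above: "?F < a" using \<open>\<not> a < ?F\<close> by (cases "a = ?F") auto
  have one: "1 \<notin> T" using two ns unfolding numerical_semigroup_def by (metis one_add_one)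
  have F1: "?F - 1 \<in> T" and F2: "?F - 2 \<in> T"
    using symmetric_complement[OF sym] one two by auto
  have "2 \<le> ?F" using not_in_le_frobenius[OF ns two] .
  with F1 one have F3: "3 \<le> ?F" by (cases "?F = 2") auto
  have "(a - ?F) dvd (?F - 1)" "(a - ?F) dvd (?F - 2)"
    using indecomposable_above_frobenius_dvd[OF sym indec above] F1 F2 above by simp_all
  then have "(a - ?F) dvd (?F - 1) - (?F - 2)" by (rule dvd_diff_nat)
  moreover have "(?F - 1) - (?F - 2) = 1" using F3 by simp
  ultimately have "a - ?F = 1" by simp
  moreover have "a - ?F \<in> T"
    using indecomposable_above_frobenius_diff_in[OF sym indec above F2] above F3 by simp
  ultimately show False using one by simp
qed

lemma generated_empty: "generated {} = {0}"
  by (auto elim: generated.cases intro: generated.zero)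

theorem mainTheorem13:
  fixes T A :: "nat set"
  assumes "symmetric_ns T"
    and "minimal_generators T A"
    and "2 \<notin> T"
  shows "finite A \<and> Max A < frobenius T"
proof -
  have bound: "a < frobenius T" if "a \<in> A" for a
    using sum_indecomposable_less_frobenius minimal_generator_indecomposable assms that by blast
  then have fin: "finite A" by (meson finite_lessThan finite_subset lessThan_iff subsetI)
  have "A \<noteq> {}"
  proof
    assume "A = {}"
    then have "UNIV - {0} \<subseteq> UNIV - T"
      using assms(2) generated_empty by (auto simp: minimal_generators_def)
    moreover have "finite (UNIV - T)"
      using assms(1) by (simp add: symmetric_ns_def numerical_semigroup_def)
    ultimately have "finite (UNIV - {0 :: nat})" by (rule finite_subset)
    then show False by simp
  qed
  with fin bound show ?thesis by simp
qed

end
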